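(* Let $n$ be a positive integer and let $\mathscr{R}$ be a type $I_n$ von Neumann algebra with center $\mathscr{C}$. A unitary $U \in \mathscr{R}$ can be written as a product $U = R_1R_2R_3R_4$ of four symmetries (self-adjoint unitaries) $R_1,R_2,R_3,R_4 \in \mathscr{R}$ if and only if $\det_c(U)$ is a symmetry in $\mathscr{C}$.
   Context: Since $\mathscr{R}$ is of type $I_n$, $\mathscr{R} \cong M_n(\mathscr{C})$, and $\mathscr{C} \cong C(X)$ for a hyperstonean compact space $X$, so $\mathscr{R} \cong M_n(C(X)) \cong C(X; M_n(\mathbb{C}))$, the algebra of continuous $M_n(\mathbb{C})$-valued functions on $X$. The center-valued determinant $\det_c : \mathscr{R} \to \mathscr{C}$ is defined by $\det_c(f) = \det \circ f \in C(X)$ for $f \in C(X; M_n(\mathbb{C}))$, where $\det$ is the usual determinant on $M_n(\mathbb{C})$; equivalently, for $f=(f_{jk}) \in M_n(C(X))$, $\det_c(f)(x) = \sum_{\sigma \in S_n} \mathrm{sgn}(\sigma)\prod_{j=1}^n f_{j\sigma(j)}(x)$. A symmetry is a self-adjoint unitary. *)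

theory Defs
  imports "HOL-Analysis.Analysis"
begin

definition extremally_disconnected :: "'a topology \<Rightarrow> bool" where
  "extremally_disconnected X \<longleftrightarrow>
     (\<forall>U. openin X U \<longrightarrow> openin X (X closure_of U))"

definition stonean_space :: "'a topology \<Rightarrow> bool" where
  "stonean_space X \<longleftrightarrow> compact_space X \<and> Hausdorff_space X \<and> extremally_disconnected X"

definition borel_sets_of :: "'a topology \<Rightarrow> 'a set set" where
  "borel_sets_of X = sigma_sets (topspace X) {U. openin X U}"

definition radon_measure_on :: "'a topology \<Rightarrow> 'a measure \<Rightarrow> bool" where
  "radon_measure_on X M \<longleftrightarrow>
     space M = topspace X \<and> sets M = borel_sets_of X \<and>
     emeasure M (space M) < \<infinity> \<and>
     (\<forall>B\<in>sets M. emeasure M B =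
        (SUP K\<in>{K. compactin X K \<and> K \<subseteq> B}. emeasure M K))"

definition normal_measure_on :: "'a topology \<Rightarrow> 'a measure \<Rightarrow> bool" where
  "normal_measure_on X M \<longleftrightarrow> radon_measure_on X M \<and>
     (\<forall>N\<in>sets M. X interior_of (X closure_of N) = {} \<longrightarrow> emeasure M N = 0)"

text \<open>Hyperstonean: Stonean, and the supports of normal measures are dense
  (every nonempty open set has positive measure for some normal measure).\<close>
definition hyperstonean :: "'a topology \<Rightarrow> bool" where
  "hyperstonean X \<longleftrightarrow> stonean_space X \<and>
     (\<forall>U. openin X U \<and> U \<noteq> {} \<longrightarrow>
        (\<exists>M. normal_measure_on X M \<and> emeasure M U > 0))"

definition mat_adjoint :: "complex^'n^'n \<Rightarrow> complex^'n^'n" where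
  "mat_adjoint A = (\<chi> i j. cnj (A $ j $ i))"

definition mat_unitary :: "complex^'n^'n \<Rightarrow> bool" where
  "mat_unitary A \<longleftrightarrow> A ** mat_adjoint A = mat 1 \<and> mat_adjoint A ** A = mat 1"

definition mat_symmetry :: "complex^'n^'n \<Rightarrow> bool" where
  "mat_symmetry A \<longleftrightarrow> mat_adjoint A = A \<and> mat_unitary A"

text \<open>Elements of C(X; M_n(C)) are continuous functions on topspace X
  (values outside topspace X are irrelevant).\<close>
definition cont_mat_fun :: "'a topology \<Rightarrow> ('a \<Rightarrow> complex^'n^'n) \<Rightarrow> bool" where
  "cont_mat_fun X f \<longleftrightarrow> continuous_map X euclidean f"

definition unitary_in :: "'a topology \<Rightarrow> ('a \<Rightarrow> complex^'n^'n) \<Rightarrow> bool" where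
  "unitary_in X U \<longleftrightarrow> cont_mat_fun X U \<and> (\<forall>x\<in>topspace X. mat_unitary (U x))"

definition symmetry_in :: "'a topology \<Rightarrow> ('a \<Rightarrow> complex^'n^'n) \<Rightarrow> bool" where
  "symmetry_in X R \<longleftrightarrow> cont_mat_fun X R \<and> (\<forall>x\<in>topspace X. mat_symmetry (R x))"

definition det_c :: "('a \<Rightarrow> complex^'n^'n) \<Rightarrow> 'a \<Rightarrow> complex" where
  "det_c f = (\<lambda>x. det (f x))"

definition center_symmetry :: "'a topology \<Rightarrow> ('a \<Rightarrow> complex) \<Rightarrow> bool" where
  "center_symmetry X g \<longleftrightarrow> continuous_map X euclidean g \<and>
     (\<forall>x\<in>topspace X. cnj (g x) = g x \<and> g x * cnj (g x) = 1)"

end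

theory Submission
  imports Defs
begin

text \<open>
  Pointwise this is linear algebra. A unitary matrix with real determinant is unitarily
  diagonalisable, \<open>U = W D W\<^sup>*\<close>. With the partial products \<open>r\<^sub>k = d\<^sub>0 \<cdots> d\<^sub>k\<^sub>-\<^sub>1\<close> of the
  eigenvalues, \<open>D = diag e\<^sub>0 \<cdot> diag e\<^sub>1\<close>, where \<open>e\<^sub>p k\<close> is \<open>r\<^sub>k\<^sub>+\<^sub>1\<close> or \<open>cnj r\<^sub>k\<close> according to
  the parity of \<open>k + p\<close>. Each \<open>e\<^sub>p\<close> is conjugate-symmetric under the involution that pairs
  neighbouring indices \<open>k, k + 1\<close> with \<open>k + p\<close> even; at an unpaired end its value is \<open>1\<close> or
  \<open>r\<^sub>N = det U\<close>, which is real. A diagonal unitary that is conjugate-symmetric under an involution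
  \<open>\<sigma>\<close> is the product of two symmetries, namely weighted permutation matrices of \<open>\<sigma>\<close>. Conversely
  the determinant of a symmetry is real and unimodular.

  The factors are chosen continuously using only that \<open>X\<close> is extremally disconnected (Gleason):
  among the closed relations between \<open>X\<close> and a compact Hausdorff space that are contained in a
  given one and have full domain there is a minimal one by Zorn's lemma, and a minimal one is the
  graph of a continuous map. This is applied to the compact set of quadruples of symmetries
  whose product is \<open>U x\<close>.
\<close>

definition cinner :: "complex^'n \<Rightarrow> complex^'n \<Rightarrow> complex" where
  "cinner x y = (\<Sum>i\<in>UNIV. x$i * cnj (y$i))"

lemma cinner_add_left: "cinner (x + y) z = cinner x z + cinner y z"
  unfolding cinner_def by (simp add: distrib_right sum.distrib)

lemma cinner_add_right: "cinner x (y + z) = cinner x y + cinner x z"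
  unfolding cinner_def by (simp add: distrib_left sum.distrib)

lemma cinner_diff_left: "cinner (x - y) z = cinner x z - cinner y z"
  unfolding cinner_def by (simp add: left_diff_distrib sum_subtractf)

lemma cinner_scale_left: "cinner (c *s x) y = c * cinner x y"
  unfolding cinner_def by (simp add: sum_distrib_left mult.assoc)

lemma cinner_scale_right: "cinner x (c *s y) = cnj c * cinner x y"
  unfolding cinner_def by (simp add: sum_distrib_left mult.assoc mult.left_commute)

lemma cinner_sum_left: "cinner (\<Sum>b\<in>B. f b) y = (\<Sum>b\<in>B. cinner (f b) y)"
  unfolding cinner_def by (simp add: sum_distrib_right sum.swap[of _ UNIV])

lemma cinner_zero_left [simp]: "cinner 0 y = 0"
  unfolding cinner_def by simp

lemma cinner_commute: "cinner y x = cnj (cinner x y)"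
  unfolding cinner_def by (simp add: mult.commute)

lemma cinner_self: "cinner x x = of_real ((norm x)\<^sup>2)"
proof -
  have "cinner x x = (\<Sum>i\<in>UNIV. of_real ((cmod (x$i))\<^sup>2))"
    unfolding cinner_def by (simp only: complex_norm_square)
  also have "\<dots> = of_real ((norm x)\<^sup>2)"
    by (simp add: norm_vec_def L2_set_def sum_nonneg)
  finally show ?thesis .
qed

lemma cinner_self_eq_0 [simp]: "cinner x x = 0 \<longleftrightarrow> x = 0"
  by (simp add: cinner_self)

lemma norm_vec_scale: "norm (c *s x) = cmod c * norm (x :: complex^'n)"
  by (simp add: norm_vec_def L2_set_def norm_mult power_mult_distrib sum_distrib_left[symmetric]
      real_sqrt_mult)

lemma mat_adjoint_nth [simp]: "mat_adjoint A $ i $ j = cnj (A $ j $ i)"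
  unfolding mat_adjoint_def by simp

lemma mat_adjoint_adjoint [simp]: "mat_adjoint (mat_adjoint A) = A"
  by (simp add: vec_eq_iff)

lemma mat_adjoint_add: "mat_adjoint (A + B) = mat_adjoint A + mat_adjoint B"
  by (simp add: vec_eq_iff)

lemma mat_adjoint_mult: "mat_adjoint (A ** B) = mat_adjoint B ** mat_adjoint A"
  by (simp add: vec_eq_iff matrix_matrix_mult_def mult.commute)

lemma mat_adjoint_diff: "mat_adjoint (A - B) = mat_adjoint A - mat_adjoint B"
  by (simp add: vec_eq_iff)

lemma mat_adjoint_mat [simp]: "mat_adjoint (mat c) = mat (cnj c)"
  by (simp add: vec_eq_iff mat_def)

lemma mat_vector_mult: "mat c *v x = c *s (x :: complex^'n)"
proof -
  have "(\<Sum>j\<in>UNIV. (if i = j then c else 0) * x $ j) = c * x $ i" for i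
    by (simp add: if_distrib[of "\<lambda>a. a * _"] cong: if_cong)
  then show ?thesis
    by (simp add: vec_eq_iff matrix_vector_mult_def mat_def)
qed

lemma cinner_adjoint: "cinner (A *v x) y = cinner x (mat_adjoint A *v y)"
proof -
  have "cinner (A *v x) y = (\<Sum>i\<in>UNIV. \<Sum>j\<in>UNIV. A$i$j * x$j * cnj (y$i))"
    unfolding cinner_def matrix_vector_mult_def by (simp add: sum_distrib_right)
  also have "\<dots> = (\<Sum>j\<in>UNIV. \<Sum>i\<in>UNIV. A$i$j * x$j * cnj (y$i))"
    by (rule sum.swap)
  also have "\<dots> = cinner x (mat_adjoint A *v y)"
    unfolding cinner_def matrix_vector_mult_def by (simp add: sum_distrib_left mult_ac)
  finally show ?thesis .
qed

lemma cinner_adjoint_right: "cinner x (A *v y) = cinner (mat_adjoint A *v x) y"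
  by (metis cinner_adjoint mat_adjoint_adjoint)

lemma mat_unitary_adjoint: "mat_unitary U \<Longrightarrow> mat_unitary (mat_adjoint U)"
  unfolding mat_unitary_def by simp

lemma mat_unitary_mult: "mat_unitary U \<Longrightarrow> mat_unitary V \<Longrightarrow> mat_unitary (U ** V)"
  unfolding mat_unitary_def mat_adjoint_mult
  by (metis matrix_mul_assoc matrix_mul_rid)

lemma det_adjoint: "det (mat_adjoint A) = cnj (det A)"
proof -
  have "mat_adjoint A = transpose (\<chi> i j. cnj (A $ i $ j))"
    by (simp add: vec_eq_iff transpose_def)
  then have "det (mat_adjoint A) = det (\<chi> i j. cnj (A $ i $ j))"
    by (simp add: det_transpose)
  also have "\<dots> = cnj (det A)"
    unfolding det_def by simp
  finally show ?thesis .
qed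

lemma det_unitary_unimodular: "mat_unitary U \<Longrightarrow> det U * cnj (det U) = 1"
  unfolding mat_unitary_def by (metis det_I det_adjoint det_mul)

lemma continuous_on_matrix_mult:
  fixes f g :: "'a::topological_space \<Rightarrow> complex^'n^'n"
  shows "continuous_on S f \<Longrightarrow> continuous_on S g \<Longrightarrow> continuous_on S (\<lambda>x. f x ** g x)"
  unfolding matrix_matrix_mult_def by (intro continuous_on_vec_lambda continuous_intros)

lemma continuous_on_mat_adjoint: "continuous_on S (mat_adjoint :: complex^'n^'n \<Rightarrow> _)"
  unfolding mat_adjoint_def by (intro continuous_on_vec_lambda continuous_intros)

lemma continuous_on_det: "continuous_on S (det :: complex^'n^'n \<Rightarrow> complex)"
  unfolding det_def by (intro continuous_intros)

lemma norm_unitary: "mat_unitary U \<Longrightarrow> norm U = sqrt (real CARD('n))" for U :: "complex^'n^'n"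
proof -
  assume U: "mat_unitary U"
  have "(norm (U $ i))\<^sup>2 = 1" for i
  proof -
    have "cinner (U $ i) (U $ i) = (U ** mat_adjoint U) $ i $ i"
      by (simp add: cinner_def matrix_matrix_mult_def)
    also have "\<dots> = 1"
      using U by (simp add: mat_unitary_def mat_def)
    finally show ?thesis
      by (metis cinner_self of_real_eq_1_iff)
  qed
  then have "(norm U)\<^sup>2 = real CARD('n)"
    by (simp add: norm_vec_def L2_set_def sum_nonneg)
  then show ?thesis
    by (simp add: real_sqrt_unique)
qed

lemma compact_symmetries: "compact {R :: complex^'n^'n. mat_symmetry R}"
  unfolding compact_eq_bounded_closed
proof
  show "bounded {R :: complex^'n^'n. mat_symmetry R}"
    unfolding bounded_iff by (auto simp: mat_symmetry_def norm_unitary)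
  have "{R :: complex^'n^'n. mat_symmetry R}
      = {R. mat_adjoint R = R} \<inter> {R. R ** mat_adjoint R = mat 1} \<inter> {R. mat_adjoint R ** R = mat 1}"
    unfolding mat_symmetry_def mat_unitary_def by auto
  then show "closed {R :: complex^'n^'n. mat_symmetry R}"
    by (auto intro!: closed_Int closed_Collect_eq continuous_on_matrix_mult continuous_on_mat_adjoint
        continuous_on_id continuous_on_const)
qed

lemma det_symmetry_real: "mat_symmetry R \<Longrightarrow> cnj (det R) = det R"
  unfolding mat_symmetry_def by (metis det_adjoint)

section \<open>Eigenvectors and the spectral theorem for unitary matrices\<close>

lemma closed_vec_subspace:
  assumes "vec.subspace (V :: (complex^'n) set)"
  shows "closed V"
proof (rule closed_subspace)
  have "r *\<^sub>R x = (of_real r :: complex) *s x" for r and x :: "complex^'n"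
    unfolding vec_eq_iff vector_scaleR_component vector_smult_component
    by (simp add: scaleR_conv_of_real)
  then show "subspace V"
    using assms unfolding subspace_def vec.subspace_def by metis
qed

lemma nonpos_if_dominated_by_square:
  fixes a q :: real
  assumes "\<And>t. t > 0 \<Longrightarrow> 2 * t * a \<le> t\<^sup>2 * q"
  shows "a \<le> 0"
proof (rule ccontr)
  assume "\<not> a \<le> 0"
  define t where "t = a / (\<bar>q\<bar> + 1)"
  have t: "t > 0" and "t * \<bar>q\<bar> < a"
    using \<open>\<not> a \<le> 0\<close> by (auto simp: t_def field_simps)
  then have "t * (t * \<bar>q\<bar>) < t * a"
    by simp
  moreover have "t\<^sup>2 * q \<le> t * (t * \<bar>q\<bar>)"
    using t by (simp add: power2_eq_square mult_left_mono)
  moreover have "t * a > 0"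
    using t \<open>\<not> a \<le> 0\<close> by simp
  ultimately show False
    using assms[OF t] by linarith
qed

lemma hermitian_nonpos_form_zero_imp_kernel:
  assumes herm: "mat_adjoint H = H" and V: "vec.subspace V"
    and inv: "\<And>y. y \<in> V \<Longrightarrow> H *v y \<in> V"
    and nonpos: "\<And>y. y \<in> V \<Longrightarrow> Re (cinner (H *v y) y) \<le> 0"
    and x: "x \<in> V" and zero: "Re (cinner (H *v x) x) = 0"
  shows "H *v x = 0"
proof -
  define z where "z = H *v x"
  have zV: "z \<in> V"
    unfolding z_def by (rule inv[OF x])
  have Hz_x: "cinner (H *v z) x = cinner z z"
    using cinner_adjoint[of H z x] by (simp add: herm z_def)
  \<comment> \<open>First variation: along \<open>x + t z\<close> the form grows like \<open>2 t |z|\<^sup>2 + O(t\<^sup>2)\<close>.\<close>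
  have "2 * t * (norm z)\<^sup>2 \<le> t\<^sup>2 * (- Re (cinner (H *v z) z))" if "t > 0" for t :: real
  proof -
    have "x + of_real t *s z \<in> V"
      using V x zV by (simp add: vec.subspace_add vec.subspace_scale)
    then have "Re (cinner (H *v (x + of_real t *s z)) (x + of_real t *s z)) \<le> 0"
      by (rule nonpos)
    moreover have "cinner (H *v (x + of_real t *s z)) (x + of_real t *s z)
        = cinner (H *v x) x + of_real t * (cinner z z + cinner z z) + of_real t * of_real t * cinner (H *v z) z"
      using Hz_x
      unfolding matrix_vector_right_distrib vector_scalar_commute cinner_add_left
          cinner_add_right cinner_scale_left cinner_scale_right z_def[symmetric]
      by (simp add: algebra_simps)
    ultimately show ?thesis
      using zero by (simp add: cinner_self power2_eq_square)
  qed
  then have "(norm z)\<^sup>2 \<le> 0"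
    by (rule nonpos_if_dominated_by_square)
  then show ?thesis
    by (simp add: z_def)
qed

lemma hermitian_form_max_imp_eigenvector:
  assumes herm: "mat_adjoint H = H" and V: "vec.subspace V"
    and inv: "\<And>y. y \<in> V \<Longrightarrow> H *v y \<in> V"
    and bound: "\<And>y. y \<in> V \<Longrightarrow> Re (cinner (H *v y) y) \<le> a * (norm y)\<^sup>2"
    and x: "x \<in> V" and attained: "Re (cinner (H *v x) x) = a * (norm x)\<^sup>2"
  shows "H *v x = of_real a *s x"
proof -
  define H' where "H' = H - mat (of_real a)"
  have H'v: "H' *v y = H *v y - of_real a *s y" for y
    by (simp add: H'_def matrix_vector_mult_diff_rdistrib mat_vector_mult)
  have "mat_adjoint H' = H'"
    by (simp add: H'_def herm mat_adjoint_diff)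
  moreover have "H' *v y \<in> V" if "y \<in> V" for y
    using that V inv by (simp add: H'v vec.subspace_diff vec.subspace_scale)
  moreover have "Re (cinner (H' *v y) y) \<le> 0" if "y \<in> V" for y
    using bound[OF that] by (simp add: H'v cinner_diff_left cinner_scale_left cinner_self)
  moreover have "Re (cinner (H' *v x) x) = 0"
    using attained by (simp add: H'v cinner_diff_left cinner_scale_left cinner_self)
  ultimately have "H' *v x = 0"
    using hermitian_nonpos_form_zero_imp_kernel[OF _ V] x by blast
  then show ?thesis
    by (simp add: H'v)
qed

lemma hermitian_eigenvector:
  assumes herm: "mat_adjoint H = H" and V: "vec.subspace V"
    and inv: "\<And>y. y \<in> V \<Longrightarrow> H *v y \<in> V"
    and v: "v \<in> V" "v \<noteq> 0"
  shows "\<exists>x\<in>V. x \<noteq> 0 \<and> (\<exists>a::real. H *v x = of_real a *s x)"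
proof -
  let ?f = "\<lambda>y. Re (cinner (H *v y) y)"
  let ?S = "V \<inter> sphere 0 1"
  have unit: "of_real (1 / norm y) *s y \<in> ?S" if "y \<in> V" "y \<noteq> 0" for y
    using that V by (simp add: vec.subspace_scale norm_vec_scale norm_divide)
  have "compact ?S"
    using closed_vec_subspace[OF V] by (simp add: closed_Int_compact)
  moreover have "?S \<noteq> {}"
    using unit[OF v] by blast
  moreover have "continuous_on ?S ?f"
    unfolding cinner_def matrix_vector_mult_def by (intro continuous_intros)
  ultimately obtain x where x: "x \<in> ?S" and max: "\<And>y. y \<in> ?S \<Longrightarrow> ?f y \<le> ?f x"
    using continuous_attains_sup[of ?S ?f] by blast
  have "?f y \<le> ?f x * (norm y)\<^sup>2" if y: "y \<in> V" for y
  proof (cases "y = 0")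
    case False
    define c :: complex where "c = of_real (1 / norm y)"
    have "cinner (H *v y) y = of_real ((norm y)\<^sup>2) * cinner (H *v (c *s y)) (c *s y)"
      using False by (simp add: c_def vector_scalar_commute cinner_scale_left cinner_scale_right
          power2_eq_square)
    then have "?f y = (norm y)\<^sup>2 * ?f (c *s y)"
      by simp
    also have "\<dots> \<le> (norm y)\<^sup>2 * ?f x"
      using max[OF unit[OF y False, folded c_def]] by (simp add: mult_left_mono)
    finally show ?thesis
      by (simp add: mult.commute)
  qed (simp add: matrix_vector_mult_0_right)
  then have "H *v x = of_real (?f x) *s x"
    using x by (intro hermitian_form_max_imp_eigenvector[OF herm V inv]) simp_all
  moreover have "x \<noteq> 0"
    using x by auto
  ultimately show ?thesis
    using x by blast
qed

lemma commuting_hermitian_common_eigenvector: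
  assumes herm: "mat_adjoint H1 = H1" "mat_adjoint H2 = H2"
    and commute: "\<And>y. H1 *v (H2 *v y) = H2 *v (H1 *v y)"
    and V: "vec.subspace V" and inv: "\<And>y. y \<in> V \<Longrightarrow> H1 *v y \<in> V" "\<And>y. y \<in> V \<Longrightarrow> H2 *v y \<in> V"
    and v: "v \<in> V" "v \<noteq> 0"
  shows "\<exists>x\<in>V. x \<noteq> 0 \<and> (\<exists>a b::real. H1 *v x = of_real a *s x \<and> H2 *v x = of_real b *s x)"
proof -
  obtain x1 a where x1: "x1 \<in> V" "x1 \<noteq> 0" "H1 *v x1 = of_real a *s x1"
    using hermitian_eigenvector[OF herm(1) V inv(1) v] by blast
  define E where "E = {y \<in> V. H1 *v y = of_real a *s y}"
  have E: "vec.subspace E"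
    using V unfolding E_def vec.subspace_def
    by (simp add: matrix_vector_right_distrib vector_scalar_commute vector_ssub_ldistrib
        vec_eq_iff algebra_simps)
  have "H2 *v y \<in> E" if "y \<in> E" for y
    using that inv(2) unfolding E_def by (simp add: commute vector_scalar_commute)
  moreover have "x1 \<in> E"
    using x1 unfolding E_def by blast
  ultimately obtain x b where "x \<in> E" "x \<noteq> 0" "H2 *v x = of_real b *s x"
    using hermitian_eigenvector[OF herm(2) E _ _ \<open>x1 \<noteq> 0\<close>] by blast
  then show ?thesis
    unfolding E_def by blast
qed

lemma normal_eigenvector:
  assumes normal: "A ** mat_adjoint A = mat_adjoint A ** A" and V: "vec.subspace V"
    and inv: "\<And>y. y \<in> V \<Longrightarrow> A *v y \<in> V" "\<And>y. y \<in> V \<Longrightarrow> mat_adjoint A *v y \<in> V"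
    and v: "v \<in> V" "v \<noteq> 0"
  shows "\<exists>x\<in>V. x \<noteq> 0 \<and> (\<exists>l. A *v x = l *s x)"
proof -
  \<comment> \<open>\<open>A = (H1 + \<i> H2) / 2\<close> with Hermitian \<open>H1\<close>, \<open>H2\<close> that commute because \<open>A\<close> is normal.\<close>
  define H1 where "H1 = A + mat_adjoint A"
  define H2 where "H2 = (\<chi> i j. \<i> * (mat_adjoint A - A) $ i $ j)"
  have H1v: "H1 *v y = A *v y + mat_adjoint A *v y" for y
    by (simp add: H1_def matrix_vector_mult_add_rdistrib)
  have H2v: "H2 *v y = \<i> *s (mat_adjoint A *v y - A *v y)" for y
    unfolding H2_def matrix_vector_mult_diff_rdistrib[symmetric]
    by (simp add: vec_eq_iff matrix_vector_mult_def sum_distrib_left mult.assoc)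
  have "A *v (mat_adjoint A *v y) = mat_adjoint A *v (A *v y)" for y
    by (simp add: matrix_vector_mul_assoc normal)
  then have commute: "H1 *v (H2 *v y) = H2 *v (H1 *v y)" for y
    by (simp add: H1v H2v matrix_vector_right_distrib matrix_vector_mult_diff_distrib
        vector_scalar_commute vec_eq_iff algebra_simps)
  have herm: "mat_adjoint H1 = H1" "mat_adjoint H2 = H2"
    unfolding H1_def H2_def by (simp_all add: mat_adjoint_add add.commute vec_eq_iff algebra_simps)
  have invH: "H1 *v y \<in> V" "H2 *v y \<in> V" if "y \<in> V" for y
    using that V inv by (simp_all add: H1v H2v vec.subspace_add vec.subspace_diff vec.subspace_scale)
  obtain x a b where x: "x \<in> V" "x \<noteq> 0"
    and ab: "H1 *v x = of_real a *s x" "H2 *v x = of_real b *s x"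
    using commuting_hermitian_common_eigenvector[OF herm commute V invH v] by blast
  have "(A *v x) $ k = (of_real a + \<i> * of_real b) / 2 * x $ k" for k
  proof -
    have "(A *v x) $ k + (mat_adjoint A *v x) $ k = of_real a * x $ k"
      and "\<i> * ((mat_adjoint A *v x) $ k - (A *v x) $ k) = of_real b * x $ k"
      using ab by (auto simp: H1v H2v vec_eq_iff right_diff_distrib)
    then show ?thesis
      using i_squared by algebra
  qed
  then have "A *v x = ((of_real a + \<i> * of_real b) / 2) *s x"
    by (simp add: vec_eq_iff)
  then show ?thesis
    using x by blast
qed

definition orthonormal :: "(complex^'n) set \<Rightarrow> bool" where
  "orthonormal B \<longleftrightarrow> (\<forall>b\<in>B. \<forall>c\<in>B. cinner b c = (if b = c then 1 else 0))"

lemma orthonormal_orthogonal_vector: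
  fixes B :: "(complex^'n) set"
  assumes B: "orthonormal B" "finite B" and card: "card B < CARD('n)"
  obtains w where "w \<noteq> 0" "\<And>b. b \<in> B \<Longrightarrow> cinner w b = 0"
proof -
  have "vec.dim (UNIV :: (complex^'n) set) = CARD('n)"
    by (rule vec_dim_card)
  then have "\<not> UNIV \<subseteq> vec.span B"
    using vec.dim_le_card[of UNIV B] B(2) card by auto
  then obtain v where v: "v \<notin> vec.span B"
    by blast
  define w where "w = v - (\<Sum>b\<in>B. cinner v b *s b)"
  have "(\<Sum>b\<in>B. cinner v b *s b) \<in> vec.span B"
    by (intro vec.span_sum vec.span_scale vec.span_base)
  then have "w \<noteq> 0"
    using v unfolding w_def by auto
  moreover have "cinner w c = 0" if c: "c \<in> B" for c
  proof -
    have "(\<Sum>b\<in>B. cinner v b * cinner b c) = (\<Sum>b\<in>B. if b = c then cinner v b else 0)"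
      using B(1) c unfolding orthonormal_def by (intro sum.cong) auto
    also have "\<dots> = cinner v c"
      using B(2) c by simp
    finally show ?thesis
      unfolding w_def by (simp add: cinner_diff_left cinner_sum_left cinner_scale_left)
  qed
  ultimately show ?thesis
    using that by blast
qed

lemma unitary_eigenvector_adjoint:
  assumes U: "mat_unitary U" and b: "U *v b = l *s b"
  shows "mat_adjoint U *v b = cnj l *s b"
proof (cases "b = 0")
  case False
  have UU: "mat_adjoint U *v (U *v y) = y" for y
    using U by (simp add: mat_unitary_def matrix_vector_mul_assoc)
  have "cinner b b = cinner (U *v b) (U *v b)"
    by (simp add: cinner_adjoint UU)
  also have "\<dots> = (l * cnj l) * cinner b b"
    by (simp add: b cinner_scale_left cinner_scale_right)
  finally have "l * cnj l = 1"
    using False by simp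
  moreover have "b = l *s (mat_adjoint U *v b)"
    using UU[of b] by (simp add: b vector_scalar_commute)
  ultimately show ?thesis
    by (metis vector_smult_assoc mult.commute vector_smult_lid)
qed (simp add: matrix_vector_mult_0_right)

lemma unitary_unit_eigenvector_orthogonal:
  fixes U :: "complex^'n^'n"
  assumes U: "mat_unitary U" and eig: "\<forall>b\<in>B. \<exists>l. U *v b = l *s b"
    and w: "w \<noteq> 0" "\<And>b. b \<in> B \<Longrightarrow> cinner w b = 0"
  obtains u where "cinner u u = 1" "\<And>b. b \<in> B \<Longrightarrow> cinner u b = 0" "\<exists>l. U *v u = l *s u"
proof -
  define V where "V = {x. \<forall>b\<in>B. cinner x b = 0}"
  have V: "vec.subspace V"
    unfolding V_def vec.subspace_def by (simp add: cinner_add_left cinner_scale_left)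
  have "U *v x \<in> V" "mat_adjoint U *v x \<in> V" if x: "x \<in> V" for x
  proof -
    have "cinner (U *v x) b = 0 \<and> cinner (mat_adjoint U *v x) b = 0" if b: "b \<in> B" for b
    proof -
      obtain l where l: "U *v b = l *s b"
        using eig b by blast
      show ?thesis
        using x b by (simp add: V_def cinner_adjoint cinner_adjoint_right[symmetric] l
            unitary_eigenvector_adjoint[OF U l] cinner_scale_right)
    qed
    then show "U *v x \<in> V" "mat_adjoint U *v x \<in> V"
      unfolding V_def by auto
  qed
  moreover have "U ** mat_adjoint U = mat_adjoint U ** U"
    using U by (simp add: mat_unitary_def)
  moreover have "w \<in> V"
    using w unfolding V_def by blast
  ultimately obtain x l where x: "x \<in> V" "x \<noteq> 0" "U *v x = l *s x"
    using normal_eigenvector[OF _ V _ _ _ \<open>w \<noteq> 0\<close>] by blast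
  define u where "u = of_real (1 / norm x) *s x"
  have "norm u = 1"
    using x(2) by (simp add: u_def norm_vec_scale norm_divide)
  then have "cinner u u = 1"
    by (simp add: cinner_self)
  moreover have "cinner u b = 0" if "b \<in> B" for b
    using x(1) that by (simp add: u_def V_def cinner_scale_left)
  moreover have "U *v u = l *s u"
    using x(3) by (simp add: u_def vector_scalar_commute vector_smult_assoc mult.commute)
  ultimately show thesis
    using that by blast
qed

lemma unitary_orthonormal_eigenbasis:
  fixes U :: "complex^'n^'n"
  assumes U: "mat_unitary U"
  obtains B where "finite B" "card B = CARD('n)" "orthonormal B"
    "\<And>b. b \<in> B \<Longrightarrow> \<exists>l. U *v b = l *s b"
proof -
  have "\<exists>B. finite B \<and> card B = k \<and> orthonormal B \<and> (\<forall>b\<in>B. \<exists>l. U *v b = l *s b)"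
    if "k \<le> CARD('n)" for k
    using that
  proof (induction k)
    case 0
    show ?case
      by (auto simp: orthonormal_def intro!: exI[of _ "{}"])
  next
    case (Suc k)
    then obtain B where B: "finite B" "card B = k" "orthonormal B"
      and eig: "\<forall>b\<in>B. \<exists>l. U *v b = l *s b"
      by auto
    obtain w where w: "w \<noteq> 0" "\<And>b. b \<in> B \<Longrightarrow> cinner w b = 0"
      using orthonormal_orthogonal_vector[OF B(3,1)] B(2) Suc.prems by auto
    obtain u where uu: "cinner u u = 1" and ub: "\<And>b. b \<in> B \<Longrightarrow> cinner u b = 0"
      and eig_u: "\<exists>l. U *v u = l *s u"
      using unitary_unit_eigenvector_orthogonal[OF U eig w] by blast
    have bu: "cinner b u = 0" if "b \<in> B" for b
      using ub[OF that] cinner_commute[of u b] by simp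
    have "u \<notin> B"
      using uu ub by fastforce
    then have "finite (insert u B) \<and> card (insert u B) = Suc k \<and> orthonormal (insert u B)
        \<and> (\<forall>b\<in>insert u B. \<exists>l. U *v b = l *s b)"
      using B uu ub bu eig eig_u unfolding orthonormal_def by auto
    then show ?case
      by blast
  qed
  then show ?thesis
    using that by blast
qed

definition diag_mat :: "('n \<Rightarrow> 'a::zero) \<Rightarrow> 'a^'n^'n" where
  "diag_mat d = (\<chi> i j. if i = j then d i else 0)"

lemma unitary_diagonalization:
  fixes U :: "complex^'n^'n"
  assumes U: "mat_unitary U"
  obtains W d where "mat_unitary W" "U = W ** diag_mat d ** mat_adjoint W"
proof -
  obtain B where B: "finite B" "card B = CARD('n)" "orthonormal B"
    and eig: "\<And>b. b \<in> B \<Longrightarrow> \<exists>l. U *v b = l *s b"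
    using unitary_orthonormal_eigenbasis[OF U] by blast
  obtain g where g: "bij_betw g (UNIV :: 'n set) B"
    using finite_same_card_bij[OF finite_class.finite_UNIV B(1)] B(2) by auto
  have gB: "g j \<in> B" and g_eq: "g j = g k \<longleftrightarrow> j = k" for j k
    using g by (auto simp: bij_betw_def inj_on_def)
  define W where "W = (\<chi> i j. g j $ i)"
  define d where "d j = (SOME l. U *v g j = l *s g j)" for j
  have d: "U *v g j = d j *s g j" for j
    unfolding d_def using eig[OF gB] by (rule someI_ex)
  have "(mat_adjoint W ** W) $ j $ k = cinner (g k) (g j)" for j k
    unfolding W_def cinner_def matrix_matrix_mult_def by (simp add: mult.commute)
  then have WW: "mat_adjoint W ** W = mat 1"
    using B(3) gB g_eq unfolding orthonormal_def by (simp add: vec_eq_iff mat_def)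
  then have W: "mat_unitary W"
    unfolding mat_unitary_def using matrix_left_right_inverse by blast
  have "(U ** W) $ i $ j = (W ** diag_mat d) $ i $ j" for i j
  proof -
    have "(U ** W) $ i $ j = (U *v g j) $ i"
      by (simp add: W_def matrix_matrix_mult_def matrix_vector_mult_def)
    also have "\<dots> = (\<Sum>k\<in>UNIV. if k = j then W $ i $ k * d j else 0)"
      by (simp add: d W_def mult.commute)
    also have "\<dots> = (\<Sum>k\<in>UNIV. W $ i $ k * (if k = j then d k else 0))"
      by (rule sum.cong) auto
    also have "\<dots> = (W ** diag_mat d) $ i $ j"
      by (simp add: matrix_matrix_mult_def diag_mat_def)
    finally show ?thesis .
  qed
  then have "U ** W = W ** diag_mat d"
    by (simp add: vec_eq_iff)
  then have "U = W ** diag_mat d ** mat_adjoint W"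
    using W unfolding mat_unitary_def by (metis matrix_mul_assoc matrix_mul_rid)
  with W show ?thesis
    using that by blast
qed

section \<open>Unitary matrices with real determinant\<close>

lemma diag_mat_mult: "diag_mat a ** diag_mat b = diag_mat (\<lambda>i. a i * b i :: complex)"
proof -
  have "(\<Sum>k\<in>UNIV. (if i = k then a i else 0) * (if k = j then b k else 0))
      = (if i = j then a i * b i else 0)" for i j
    by (simp add: if_distrib[of "\<lambda>x. x * _"] cong: if_cong)
  then show ?thesis
    by (simp add: vec_eq_iff diag_mat_def matrix_matrix_mult_def)
qed

lemma diag_mat_adjoint: "mat_adjoint (diag_mat d) = diag_mat (\<lambda>i. cnj (d i))"
  by (simp add: vec_eq_iff diag_mat_def)

lemma det_diag_mat: "det (diag_mat d) = (\<Prod>i\<in>UNIV. d i)"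
  by (simp add: det_diagonal diag_mat_def)

definition weighted_perm_mat :: "('n \<Rightarrow> 'n) \<Rightarrow> ('n \<Rightarrow> complex) \<Rightarrow> complex^'n^'n" where
  "weighted_perm_mat \<sigma> c = (\<chi> i j. if j = \<sigma> i then c i else 0)"

lemma weighted_perm_mat_mult:
  assumes \<sigma>: "\<And>i. \<sigma> (\<sigma> i) = i"
  shows "weighted_perm_mat \<sigma> a ** weighted_perm_mat \<sigma> b = diag_mat (\<lambda>i. a i * b (\<sigma> i))"
proof -
  have "(\<Sum>k\<in>UNIV. (if k = \<sigma> i then a i else 0) * (if j = \<sigma> k then b k else 0))
      = (if i = j then a i * b (\<sigma> i) else 0)" for i j
    using \<sigma> by (simp add: if_distrib[of "\<lambda>x. x * _"] cong: if_cong)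
  then show ?thesis
    by (simp add: vec_eq_iff weighted_perm_mat_def diag_mat_def matrix_matrix_mult_def)
qed

lemma weighted_perm_mat_symmetry:
  assumes \<sigma>: "\<And>i. \<sigma> (\<sigma> i) = i"
    and conj: "\<And>i. c (\<sigma> i) = cnj (c i)" and unit: "\<And>i. c i * cnj (c i) = 1"
  shows "mat_symmetry (weighted_perm_mat \<sigma> c)"
proof -
  have "cnj (if i = \<sigma> j then c j else 0) = (if j = \<sigma> i then c i else 0)" for i j
    using \<sigma>[of i] \<sigma>[of j] conj[of j] by auto
  then have "mat_adjoint (weighted_perm_mat \<sigma> c) = weighted_perm_mat \<sigma> c"
    by (simp add: vec_eq_iff weighted_perm_mat_def)
  moreover have "weighted_perm_mat \<sigma> c ** weighted_perm_mat \<sigma> c = mat 1"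
    using unit by (simp add: weighted_perm_mat_mult[OF \<sigma>] conj vec_eq_iff diag_mat_def mat_def)
  ultimately show ?thesis
    unfolding mat_symmetry_def mat_unitary_def by simp
qed

lemma diag_mat_product_of_two_symmetries:
  assumes \<sigma>: "\<And>i. \<sigma> (\<sigma> i) = i"
    and conj: "\<And>i. e (\<sigma> i) = cnj (e i)" and unit: "\<And>i. e i * cnj (e i) = 1"
  shows "\<exists>R1 R2. mat_symmetry R1 \<and> mat_symmetry R2 \<and> diag_mat e = R1 ** R2"
proof (intro exI conjI)
  show "mat_symmetry (weighted_perm_mat \<sigma> (\<lambda>_. 1))"
    by (rule weighted_perm_mat_symmetry) (simp_all add: \<sigma>)
  show "mat_symmetry (weighted_perm_mat \<sigma> (\<lambda>i. e (\<sigma> i)))"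
    by (rule weighted_perm_mat_symmetry) (simp_all add: \<sigma> conj unit mult.commute)
  show "diag_mat e = weighted_perm_mat \<sigma> (\<lambda>_. 1) ** weighted_perm_mat \<sigma> (\<lambda>i. e (\<sigma> i))"
    by (simp add: weighted_perm_mat_mult \<sigma>)
qed

definition adjacent_pairing :: "nat \<Rightarrow> nat \<Rightarrow> nat \<Rightarrow> nat" where
  "adjacent_pairing p N k =
     (if even (k + p) then (if Suc k < N then Suc k else k) else if k = 0 then 0 else k - 1)"

lemma adjacent_pairing_less: "k < N \<Longrightarrow> adjacent_pairing p N k < N"
  unfolding adjacent_pairing_def by auto

lemma adjacent_pairing_involution:
  "k < N \<Longrightarrow> adjacent_pairing p N (adjacent_pairing p N k) = k"
  unfolding adjacent_pairing_def by (cases k) auto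

definition alternating_factor :: "nat \<Rightarrow> (nat \<Rightarrow> complex) \<Rightarrow> nat \<Rightarrow> complex" where
  "alternating_factor p d k = (if even (k + p) then (\<Prod>j<Suc k. d j) else cnj (\<Prod>j<k. d j))"

lemma unimodular_prod:
  "(\<And>j. j \<in> A \<Longrightarrow> d j * cnj (d j) = 1) \<Longrightarrow> prod d A * cnj (prod d A) = (1 :: complex)"
  by (induction A rule: infinite_finite_induct) (auto simp: algebra_simps)

lemma alternating_factor_unimodular:
  assumes "\<And>j. j \<le> k \<Longrightarrow> d j * cnj (d j) = 1"
  shows "alternating_factor p d k * cnj (alternating_factor p d k) = 1"
proof -
  have "prod d {..<Suc k} * cnj (prod d {..<Suc k}) = 1" "prod d {..<k} * cnj (prod d {..<k}) = 1"
    by (rule unimodular_prod, simp add: assms)+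
  then show ?thesis
    unfolding alternating_factor_def by (simp add: mult.commute del: prod.lessThan_Suc)
qed

lemma alternating_factor_mult:
  assumes "\<And>j. j < k \<Longrightarrow> d j * cnj (d j) = 1"
  shows "alternating_factor 0 d k * alternating_factor 1 d k = d k"
proof -
  have "(\<Prod>j<k. d j) * cnj (\<Prod>j<k. d j) = 1"
    using assms by (intro unimodular_prod) auto
  then show ?thesis
    unfolding alternating_factor_def by (simp add: algebra_simps)
qed

lemma alternating_factor_pairing:
  assumes k: "k < N" and real: "cnj (\<Prod>j<N. d j) = (\<Prod>j<N. d j)"
  shows "alternating_factor p d (adjacent_pairing p N k) = cnj (alternating_factor p d k)"
proof -
  consider "even (k + p)" "Suc k < N" | "even (k + p)" "Suc k = N" | "odd (k + p)" "k = 0"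
    | m where "odd (k + p)" "k = Suc m"
    using k by (cases k) force+
  then show ?thesis
    by cases (use real in \<open>simp_all add: alternating_factor_def adjacent_pairing_def\<close>)
qed

lemma diag_mat_four_symmetries:
  fixes d :: "'n::finite \<Rightarrow> complex"
  assumes unit: "\<And>i. d i * cnj (d i) = 1" and real: "cnj (\<Prod>i\<in>UNIV. d i) = (\<Prod>i\<in>UNIV. d i)"
  shows "\<exists>R1 R2 R3 R4. mat_symmetry R1 \<and> mat_symmetry R2 \<and> mat_symmetry R3 \<and> mat_symmetry R4
           \<and> diag_mat d = R1 ** R2 ** R3 ** R4"
proof -
  define N where "N = CARD('n)"
  obtain f where f: "bij_betw f (UNIV :: 'n set) {..<N}"
    unfolding N_def by (metis card_lessThan finite_class.finite_UNIV finite_lessThan finite_same_card_bij)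
  define g where "g = inv_into UNIV f"
  have f_less: "f i < N" and g_f: "g (f i) = i" for i
    using f by (auto simp: g_def bij_betw_def)
  have f_g: "k < N \<Longrightarrow> f (g k) = k" for k
    using f by (simp add: g_def bij_betw_def f_inv_into_f)
  define d' where "d' k = d (g k)" for k
  have "(\<Prod>k<N. d' k) = (\<Prod>i\<in>UNIV. d i)"
    using prod.reindex_bij_betw[OF f, of d'] by (simp add: d'_def g_f)
  then have real': "cnj (\<Prod>k<N. d' k) = (\<Prod>k<N. d' k)"
    using real by simp
  define \<sigma> where "\<sigma> p i = g (adjacent_pairing p N (f i))" for p i
  define e where "e p i = alternating_factor p d' (f i)" for p i
  have "\<exists>R1 R2. mat_symmetry R1 \<and> mat_symmetry R2 \<and> diag_mat (e p) = R1 ** R2" for p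
  proof (rule diag_mat_product_of_two_symmetries)
    show "\<sigma> p (\<sigma> p i) = i" for i
      by (simp add: \<sigma>_def f_g f_less adjacent_pairing_less adjacent_pairing_involution g_f)
    show "e p (\<sigma> p i) = cnj (e p i)" for i
      by (simp add: e_def \<sigma>_def f_g f_less adjacent_pairing_less
          alternating_factor_pairing[OF f_less real'])
    show "e p i * cnj (e p i) = 1" for i
      by (simp add: e_def d'_def alternating_factor_unimodular unit)
  qed
  then obtain R1 R2 R3 R4 where R: "mat_symmetry R1" "mat_symmetry R2" "mat_symmetry R3"
    "mat_symmetry R4" "diag_mat (e 0) = R1 ** R2" "diag_mat (e 1) = R3 ** R4"
    by metis
  have "d = (\<lambda>i. e 0 i * e 1 i)"
    unfolding e_def using alternating_factor_mult[of "f _" d'] by (simp add: d'_def unit g_f)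
  then have "diag_mat d = diag_mat (e 0) ** diag_mat (e 1)"
    by (simp add: diag_mat_mult)
  then show ?thesis
    using R by (metis matrix_mul_assoc)
qed

lemma mat_symmetry_unitary_conj:
  assumes "mat_unitary W" "mat_symmetry R"
  shows "mat_symmetry (W ** R ** mat_adjoint W)"
  using assms unfolding mat_symmetry_def
  by (simp add: mat_adjoint_mult matrix_mul_assoc mat_unitary_mult mat_unitary_adjoint)

lemma unitary_real_det_four_symmetries:
  fixes U :: "complex^'n^'n"
  assumes U: "mat_unitary U" and real: "cnj (det U) = det U"
  shows "\<exists>R1 R2 R3 R4. mat_symmetry R1 \<and> mat_symmetry R2 \<and> mat_symmetry R3 \<and> mat_symmetry R4
           \<and> U = R1 ** R2 ** R3 ** R4"
proof -
  obtain W d where W: "mat_unitary W" and U_eq: "U = W ** diag_mat d ** mat_adjoint W"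
    using unitary_diagonalization[OF U] by blast
  have WW: "mat_adjoint W ** W = mat 1"
    using W by (simp add: mat_unitary_def)
  then have WW': "A ** mat_adjoint W ** W = A" for A
    by (metis matrix_mul_assoc matrix_mul_rid)
  have "diag_mat d = mat_adjoint W ** U ** W"
    by (simp add: U_eq matrix_mul_assoc WW WW')
  then have "mat_unitary (diag_mat d)"
    by (simp add: U W mat_unitary_mult mat_unitary_adjoint)
  then have "(diag_mat d ** mat_adjoint (diag_mat d)) $ i $ i = 1" for i
    by (simp add: mat_unitary_def mat_def)
  then have unit: "d i * cnj (d i) = 1" for i
    unfolding diag_mat_adjoint diag_mat_mult by (simp add: diag_mat_def)
  have "det U = (\<Prod>i\<in>UNIV. d i)"
    using det_unitary_unimodular[OF W]
    by (simp add: U_eq det_mul det_adjoint det_diag_mat mult.commute mult.left_commute)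
  then have "cnj (\<Prod>i\<in>UNIV. d i) = (\<Prod>i\<in>UNIV. d i)"
    using real by simp
  then obtain R1 R2 R3 R4 where R: "mat_symmetry R1" "mat_symmetry R2" "mat_symmetry R3"
    "mat_symmetry R4" "diag_mat d = R1 ** R2 ** R3 ** R4"
    using diag_mat_four_symmetries[of d] unit by blast
  define conj where "conj R = W ** R ** mat_adjoint W" for R
  have "conj A ** conj B = conj (A ** B)" for A B
    by (simp add: conj_def matrix_mul_assoc WW')
  then have "U = conj R1 ** conj R2 ** conj R3 ** conj R4"
    by (simp add: U_eq R(5) conj_def)
  then show ?thesis
    using R(1-4) mat_symmetry_unitary_conj[OF W] unfolding conj_def by blast
qed

section \<open>Continuous selections over extremally disconnected spaces\<close>

lemma subset_Zorn_minimal: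
  assumes "\<A> \<noteq> {}" and ch: "\<And>\<C>. \<C> \<noteq> {} \<Longrightarrow> subset.chain \<A> \<C> \<Longrightarrow> \<Inter>\<C> \<in> \<A>"
  shows "\<exists>M\<in>\<A>. \<forall>X\<in>\<A>. X \<subseteq> M \<longrightarrow> X = M"
proof -
  have "\<exists>M\<in>uminus ` \<A>. \<forall>X\<in>uminus ` \<A>. M \<subseteq> X \<longrightarrow> X = M"
  proof (rule subset_Zorn_nonempty)
    fix \<C> assume "\<C> \<noteq> {}" "subset.chain (uminus ` \<A>) \<C>"
    then have "uminus ` \<C> \<noteq> {}" "subset.chain \<A> (uminus ` \<C>)"
      unfolding subset_chain_def by (auto simp: image_subset_iff)
    then have "\<Inter>(uminus ` \<C>) \<in> \<A>"
      by (rule ch)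
    moreover have "\<Union>\<C> = - \<Inter>(uminus ` \<C>)"
      by auto
    ultimately show "\<Union>\<C> \<in> uminus ` \<A>"
      by (rule rev_image_eqI)
  qed (metis assms(1) image_is_empty)
  then obtain M where M: "M \<in> \<A>" and minimal: "\<forall>X\<in>uminus ` \<A>. - M \<subseteq> X \<longrightarrow> X = - M"
    by (auto elim!: bexE imageE)
  show ?thesis
  proof (intro bexI[OF _ M] ballI impI)
    fix X assume "X \<in> \<A>" "X \<subseteq> M"
    then have "- X = - M"
      using minimal by simp
    then show "X = M"
      by simp
  qed
qed

lemma closedin_fibre:
  assumes "closedin (prod_topology X Y) C" and "x \<in> topspace X"
  shows "closedin Y {y \<in> topspace Y. (x, y) \<in> C}"
proof -
  have "continuous_map Y (prod_topology X Y) (\<lambda>y. (x, y))"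
    using assms(2) by (intro continuous_map_pairedI) auto
  then show ?thesis
    using assms(1) by (rule closedin_continuous_map_preimage)
qed

lemma full_domain_Inter_chain:
  assumes Y: "compact_space Y" and ne: "\<C> \<noteq> {}" and chain: "subset.chain \<A> \<C>"
    and closed: "\<And>C. C \<in> \<C> \<Longrightarrow> closedin (prod_topology X Y) C"
    and full: "\<And>C. C \<in> \<C> \<Longrightarrow> topspace X \<subseteq> fst ` C"
  shows "topspace X \<subseteq> fst ` \<Inter>\<C>"
proof
  fix x assume x: "x \<in> topspace X"
  define fibre where "fibre C = {y \<in> topspace Y. (x, y) \<in> C}" for C
  have fibre_mono: "fibre C \<subseteq> fibre D" if "C \<subseteq> D" for C D
    using that unfolding fibre_def by blast
  have fibre_ne: "fibre C \<noteq> {}" if C: "C \<in> \<C>" for C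
  proof -
    have "x \<in> fst ` C"
      using full[OF C] x ..
    moreover have "C \<subseteq> topspace X \<times> topspace Y"
      using closedin_subset[OF closed[OF C]] by simp
    ultimately obtain y where "(x, y) \<in> C" "y \<in> topspace Y"
      by force
    then show ?thesis
      unfolding fibre_def by blast
  qed
  have fibre_closed: "\<forall>U\<in>fibre ` \<C>. closedin Y U"
    using closedin_fibre[OF closed x] unfolding fibre_def by blast
  have fip: "\<forall>\<F>. finite \<F> \<and> \<F> \<subseteq> fibre ` \<C> \<longrightarrow> \<Inter>\<F> \<noteq> {}"
  proof (intro allI impI, elim conjE)
    fix \<F> assume \<F>: "finite \<F>" "\<F> \<subseteq> fibre ` \<C>"
    obtain \<G> where \<G>: "\<G> \<subseteq> \<C>" "finite \<G>" "\<F> = fibre ` \<G>"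
      using finite_subset_image[OF \<F>] by blast
    show "\<Inter>\<F> \<noteq> {}"
    proof (cases "\<G> = {}")
      case False
      have "subset.chain \<A> \<G>"
        using chain \<G>(1) by (simp add: subset_chain_def subset_iff)
      then have "\<Inter>\<G> \<in> \<G>"
        by (rule Inter_in_chain[OF \<G>(2) False])
      then have "fibre (\<Inter>\<G>) \<noteq> {}"
        using \<G>(1) by (intro fibre_ne) blast
      moreover have "fibre (\<Inter>\<G>) \<subseteq> \<Inter>\<F>"
        unfolding \<G>(3) by (intro INT_greatest fibre_mono Inter_lower)
      ultimately show ?thesis
        by blast
    qed (simp add: \<G>(3))
  qed
  obtain y where "y \<in> \<Inter>(fibre ` \<C>)"
    using Y[unfolded compact_space_fip, rule_format, OF conjI[OF fibre_closed fip]] by blast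
  then have "(x, y) \<in> \<Inter>\<C>"
    unfolding fibre_def by blast
  then show "x \<in> fst ` \<Inter>\<C>"
    by (rule rev_image_eqI) simp
qed

lemma minimal_closed_relation_with_full_domain:
  assumes Y: "compact_space Y" and P: "closedin (prod_topology X Y) P"
    and full: "topspace X \<subseteq> fst ` P"
  obtains C where "C \<subseteq> P" "closedin (prod_topology X Y) C" "topspace X \<subseteq> fst ` C"
    "\<And>C'. \<lbrakk>C' \<subseteq> C; closedin (prod_topology X Y) C'; topspace X \<subseteq> fst ` C'\<rbrakk> \<Longrightarrow> C' = C"
proof -
  define \<A> where "\<A> = {C. C \<subseteq> P \<and> closedin (prod_topology X Y) C \<and> topspace X \<subseteq> fst ` C}"
  have "\<exists>M\<in>\<A>. \<forall>C\<in>\<A>. C \<subseteq> M \<longrightarrow> C = M"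
  proof (rule subset_Zorn_minimal)
    have "P \<in> \<A>"
      using P full by (simp add: \<A>_def)
    then show "\<A> \<noteq> {}"
      by blast
    fix \<C> assume ne: "\<C> \<noteq> {}" and chain: "subset.chain \<A> \<C>"
    then have sub: "\<C> \<subseteq> \<A>"
      by (simp add: subset_chain_def)
    have members: "C \<subseteq> P \<and> closedin (prod_topology X Y) C \<and> topspace X \<subseteq> fst ` C" if "C \<in> \<C>" for C
      using subsetD[OF sub that] by (simp add: \<A>_def)
    have "topspace X \<subseteq> fst ` \<Inter>\<C>"
      by (rule full_domain_Inter_chain[OF Y ne chain]) (simp_all add: members)
    moreover have "closedin (prod_topology X Y) (\<Inter>\<C>)"
      using ne by (intro closedin_Inter) (simp_all add: members)
    moreover obtain C0 where "C0 \<in> \<C>"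
      using ne by blast
    then have "\<Inter>\<C> \<subseteq> P"
      using members by (meson Inter_lower order_trans)
    ultimately show "\<Inter>\<C> \<in> \<A>"
      by (simp add: \<A>_def)
  qed
  then obtain M where M: "M \<in> \<A>" and minimal: "\<forall>C\<in>\<A>. C \<subseteq> M \<longrightarrow> C = M"
    by (rule bexE)
  show thesis
  proof (rule that)
    show "M \<subseteq> P" "closedin (prod_topology X Y) M" "topspace X \<subseteq> fst ` M"
      using M by (simp_all add: \<A>_def)
    fix C' assume "C' \<subseteq> M" "closedin (prod_topology X Y) C'" "topspace X \<subseteq> fst ` C'"
    moreover have "C' \<subseteq> P"
      using \<open>C' \<subseteq> M\<close> \<open>M \<subseteq> P\<close> by (rule order_trans)
    ultimately show "C' = M"
      using minimal by (simp add: \<A>_def)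
  qed
qed

text \<open>\<open>topspace X - fst ` (C - topspace X \<times> G)\<close> is the set of points whose whole
  \<open>C\<close>-fibre lies in \<open>G\<close>.\<close>

lemma openin_fibre_inside:
  assumes "compact_space Y" "closedin (prod_topology X Y) C" "openin Y G"
  shows "openin X (topspace X - fst ` (C - topspace X \<times> G))"
proof -
  have "closedin (prod_topology X Y) (C - topspace X \<times> G)"
    using assms(2,3) by (intro closedin_diff) (simp_all add: openin_prod_Times_iff)
  then have "closedin X (fst ` (C - topspace X \<times> G))"
    using closed_map_fst[OF assms(1)] unfolding closed_map_def by blast
  then show ?thesis
    by (rule openin_diff[OF openin_topspace])
qed

lemma minimal_closed_relation_in_closure:
  assumes C: "closedin (prod_topology X Y) C" "topspace X \<subseteq> fst ` C"
    and minimal: "\<And>C'. \<lbrakk>C' \<subseteq> C; closedin (prod_topology X Y) C'; topspace X \<subseteq> fst ` C'\<rbrakk> \<Longrightarrow> C' = C"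
    and G: "openin Y G" and xy: "(x, y) \<in> C" "y \<in> G"
  shows "x \<in> X closure_of (topspace X - fst ` (C - topspace X \<times> G))"
  unfolding in_closure_of
proof (intro conjI allI impI)
  show "x \<in> topspace X"
    using closedin_subset[OF C(1)] xy(1) by auto
  fix N assume N: "x \<in> N \<and> openin X N"
  show "\<exists>z. z \<in> topspace X - fst ` (C - topspace X \<times> G) \<and> z \<in> N"
  proof (rule ccontr)
    assume none: "\<not> ?thesis"
    define C' where "C' = C - N \<times> G"
    have "closedin (prod_topology X Y) C'"
      unfolding C'_def using C(1) N G by (intro closedin_diff) (simp_all add: openin_prod_Times_iff)
    moreover have "topspace X \<subseteq> fst ` C'"
    proof
      fix z assume z: "z \<in> topspace X"
      show "z \<in> fst ` C'"
      proof (cases "z \<in> N")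
        case True
        then have "z \<in> fst ` (C - topspace X \<times> G)"
          using none z by blast
        then obtain w where "(z, w) \<in> C" "w \<notin> G"
          using z by force
        then have "(z, w) \<in> C'"
          unfolding C'_def by blast
        then show ?thesis
          by (rule rev_image_eqI) simp
      next
        case False
        obtain w where "(z, w) \<in> C"
          using C(2) z by force
        then show ?thesis
          using False unfolding C'_def by force
      qed
    qed
    ultimately have "C' = C"
      using minimal unfolding C'_def by blast
    then show False
      using xy N unfolding C'_def by blast
  qed
qed

lemma minimal_closed_relation_single_valued:
  assumes ED: "extremally_disconnected X" and Y: "compact_space Y" "Hausdorff_space Y"
    and C: "closedin (prod_topology X Y) C" "topspace X \<subseteq> fst ` C"
    and minimal: "\<And>C'. \<lbrakk>C' \<subseteq> C; closedin (prod_topology X Y) C'; topspace X \<subseteq> fst ` C'\<rbrakk> \<Longrightarrow> C' = C"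
    and y: "(x, y1) \<in> C" "(x, y2) \<in> C"
  shows "y1 = y2"
proof (rule ccontr)
  assume "y1 \<noteq> y2"
  have "y1 \<in> topspace Y" "y2 \<in> topspace Y"
    using closedin_subset[OF C(1)] y by auto
  then obtain G1 G2 where G: "openin Y G1" "openin Y G2" "y1 \<in> G1" "y2 \<in> G2" "disjnt G1 G2"
    using Y(2)[unfolded Hausdorff_space_def, rule_format, of y1 y2] \<open>y1 \<noteq> y2\<close> by auto
  define S where "S G = topspace X - fst ` (C - topspace X \<times> G)" for G
  have S_open: "openin X (S G)" if "openin Y G" for G
    unfolding S_def using Y(1) C(1) that by (rule openin_fibre_inside)
  have S_fibre: "y \<in> G" if "z \<in> S G" "(z, y) \<in> C" for z y G
    using that unfolding S_def by force
  have "S G1 \<inter> S G2 = {}"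
  proof (rule equals0I)
    fix z assume z: "z \<in> S G1 \<inter> S G2"
    then have "z \<in> fst ` C"
      using C(2) unfolding S_def by blast
    then obtain y where "(z, y) \<in> C"
      by force
    then show False
      using z S_fibre G(5) by (meson IntD1 IntD2 disjnt_iff)
  qed
  then have disj: "S G2 \<inter> X closure_of S G1 = {}"
    using openin_Int_closure_of_eq_empty[OF S_open[OF G(2)], of "S G1"] by (metis inf_commute)
  have closure: "x \<in> X closure_of S G" if "openin Y G" "(x, y) \<in> C" "y \<in> G" for G y
    unfolding S_def using C minimal that by (rule minimal_closed_relation_in_closure)
  \<comment> \<open>The only use of extremal disconnectedness.\<close>
  have "openin X (X closure_of S G1)"
    using ED[unfolded extremally_disconnected_def, rule_format, OF S_open[OF G(1)]] .
  moreover have "x \<in> X closure_of S G1" "x \<in> X closure_of S G2"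
    by (rule closure[OF G(1) y(1) G(3)], rule closure[OF G(2) y(2) G(4)])
  ultimately obtain z where "z \<in> S G2" "z \<in> X closure_of S G1"
    unfolding in_closure_of[of x X "S G2"] by blast
  with disj show False
    by blast
qed

lemma continuous_map_from_closed_graph:
  assumes Y: "compact_space Y" and g: "g \<in> topspace X \<rightarrow> topspace Y"
    and graph: "closedin (prod_topology X Y) ((\<lambda>x. (x, g x)) ` topspace X)"
  shows "continuous_map X Y g"
  unfolding continuous_map_closedin
proof (intro conjI allI impI g)
  fix Z assume Z: "closedin Y Z"
  have "(\<lambda>x. (x, g x)) ` topspace X \<inter> topspace X \<times> Z = (\<lambda>x. (x, g x)) ` {x \<in> topspace X. g x \<in> Z}"
    by auto
  then have "{x \<in> topspace X. g x \<in> Z} = fst ` ((\<lambda>x. (x, g x)) ` topspace X \<inter> topspace X \<times> Z)"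
    by (simp add: image_image)
  moreover have "closedin (prod_topology X Y) ((\<lambda>x. (x, g x)) ` topspace X \<inter> topspace X \<times> Z)"
    using graph Z by (intro closedin_Int) (simp_all add: closedin_prod_Times_iff)
  ultimately show "closedin X {x \<in> topspace X. g x \<in> Z}"
    using closed_map_fst[OF Y, unfolded closed_map_def, rule_format] by simp
qed

theorem extremally_disconnected_continuous_selection:
  assumes ED: "extremally_disconnected X" and Y: "compact_space Y" "Hausdorff_space Y"
    and P: "closedin (prod_topology X Y) P" and full: "topspace X \<subseteq> fst ` P"
  obtains g where "continuous_map X Y g" "\<And>x. x \<in> topspace X \<Longrightarrow> (x, g x) \<in> P"
proof -
  obtain C where C: "C \<subseteq> P" "closedin (prod_topology X Y) C" "topspace X \<subseteq> fst ` C"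
    and minimal: "\<And>C'. \<lbrakk>C' \<subseteq> C; closedin (prod_topology X Y) C'; topspace X \<subseteq> fst ` C'\<rbrakk> \<Longrightarrow> C' = C"
    using minimal_closed_relation_with_full_domain[OF Y(1) P full] by blast
  have C_sub: "C \<subseteq> topspace X \<times> topspace Y"
    using closedin_subset[OF C(2)] by simp
  define g where "g x = (SOME y. (x, y) \<in> C)" for x
  have gC: "(x, g x) \<in> C" if x: "x \<in> topspace X" for x
  proof -
    have "x \<in> fst ` C"
      using C(3) x by (rule subsetD)
    then obtain y where "(x, y) \<in> C"
      by (metis imageE prod.collapse)
    then show ?thesis
      unfolding g_def by (rule someI)
  qed
  have "C \<subseteq> (\<lambda>x. (x, g x)) ` topspace X"
  proof
    fix p assume p: "p \<in> C"
    obtain x y where xy: "p = (x, y)"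
      by (cases p)
    have x: "x \<in> topspace X"
      using subsetD[OF C_sub p] xy by simp
    have "y = g x"
      using minimal_closed_relation_single_valued[OF ED Y C(2,3) minimal] p gC[OF x] xy by simp
    with x show "p \<in> (\<lambda>x. (x, g x)) ` topspace X"
      unfolding xy by (intro rev_image_eqI) simp_all
  qed
  moreover have "(\<lambda>x. (x, g x)) ` topspace X \<subseteq> C"
    by (rule image_subsetI) (rule gC)
  ultimately have graph: "(\<lambda>x. (x, g x)) ` topspace X = C"
    by (rule subset_antisym[rotated])
  have "g x \<in> topspace Y" if "x \<in> topspace X" for x
    using subsetD[OF C_sub gC[OF that]] by simp
  then have "continuous_map X Y g"
    by (intro continuous_map_from_closed_graph[OF Y(1)] Pi_I) (simp_all add: graph C(2))
  then show thesis
    using that gC C(1) by blast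
qed

corollary extremally_disconnected_lifting:
  assumes ED: "extremally_disconnected X" and K: "compact_space K" "Hausdorff_space K"
    and Z: "Hausdorff_space Z" and F: "continuous_map K Z F" and u: "continuous_map X Z u"
    and lift: "\<And>x. x \<in> topspace X \<Longrightarrow> \<exists>k\<in>topspace K. F k = u x"
  obtains g where "continuous_map X K g" "\<And>x. x \<in> topspace X \<Longrightarrow> F (g x) = u x"
proof -
  define P where "P = {p \<in> topspace (prod_topology X K). u (fst p) = F (snd p)}"
  have "closedin (prod_topology X K) P"
    unfolding P_def using continuous_map_compose[OF continuous_map_fst u]
      continuous_map_compose[OF continuous_map_snd F]
    by (intro closedin_continuous_maps_eq[OF Z]) (simp_all add: o_def)
  moreover have "topspace X \<subseteq> fst ` P"
  proof
    fix x assume x: "x \<in> topspace X"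
    then obtain k where "k \<in> topspace K" "F k = u x"
      using lift by blast
    then have "(x, k) \<in> P"
      using x by (simp add: P_def)
    then show "x \<in> fst ` P"
      by (rule rev_image_eqI) simp
  qed
  ultimately obtain g where "continuous_map X K g" "\<And>x. x \<in> topspace X \<Longrightarrow> (x, g x) \<in> P"
    using extremally_disconnected_continuous_selection[OF ED K] by blast
  then show thesis
    using that unfolding P_def by simp
qed

corollary extremally_disconnected_lifting_euclidean:
  fixes F :: "'b::metric_space \<Rightarrow> 'c::metric_space"
  assumes ED: "extremally_disconnected X" and K: "compact K" and F: "continuous_on K F"
    and u: "continuous_map X euclidean u" and lift: "\<And>x. x \<in> topspace X \<Longrightarrow> u x \<in> F ` K"
  obtains g where "continuous_map X euclidean g" "\<And>x. x \<in> topspace X \<Longrightarrow> g x \<in> K \<and> F (g x) = u x"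
proof -
  have "compact_space (top_of_set K)"
    using K by (simp add: compact_space_subtopology compactin_euclidean_iff)
  moreover have "Hausdorff_space (top_of_set K)"
    by (simp add: Hausdorff_space_subtopology)
  moreover have "continuous_map (top_of_set K) euclidean F"
    using F by simp
  moreover have "\<exists>k\<in>topspace (top_of_set K). F k = u x" if "x \<in> topspace X" for x
    using lift[OF that] by auto
  ultimately obtain g where "continuous_map X (top_of_set K) g" "\<And>x. x \<in> topspace X \<Longrightarrow> F (g x) = u x"
    using extremally_disconnected_lifting[OF ED _ _ Hausdorff_space_euclidean _ u] by blast
  then show thesis
    using that by (auto simp: continuous_map_in_subtopology)
qed

section \<open>Symmetries in \<open>C(X; M\<^sub>n(\<complex>))\<close>\<close>

lemma continuous_symmetry_factorization:
  fixes U :: "'a \<Rightarrow> complex^'n^'n"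
  assumes ED: "extremally_disconnected X" and U: "continuous_map X euclidean U"
    and factor: "\<And>x. x \<in> topspace X \<Longrightarrow> \<exists>R1 R2 R3 R4. mat_symmetry R1 \<and> mat_symmetry R2 \<and>
            mat_symmetry R3 \<and> mat_symmetry R4 \<and> U x = R1 ** R2 ** R3 ** R4"
  shows "\<exists>R1 R2 R3 R4. symmetry_in X R1 \<and> symmetry_in X R2 \<and> symmetry_in X R3 \<and> symmetry_in X R4 \<and>
            (\<forall>x\<in>topspace X. U x = R1 x ** R2 x ** R3 x ** R4 x)"
proof -
  define S where "S = {R :: complex^'n^'n. mat_symmetry R}"
  define F where "F p = fst p ** fst (snd p) ** fst (snd (snd p)) ** snd (snd (snd p))"
    for p :: "(complex^'n^'n) \<times> (complex^'n^'n) \<times> (complex^'n^'n) \<times> (complex^'n^'n)"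
  have "compact (S \<times> S \<times> S \<times> S)"
    unfolding S_def by (intro compact_Times compact_symmetries)
  moreover have "continuous_on (S \<times> S \<times> S \<times> S) F"
    unfolding F_def by (intro continuous_on_matrix_mult continuous_intros)
  moreover have "U x \<in> F ` (S \<times> S \<times> S \<times> S)" if x: "x \<in> topspace X" for x
  proof -
    obtain R1 R2 R3 R4 where "mat_symmetry R1" "mat_symmetry R2" "mat_symmetry R3" "mat_symmetry R4"
      and "U x = R1 ** R2 ** R3 ** R4"
      using factor[OF x] by blast
    then show ?thesis
      by (intro rev_image_eqI[of "(R1, R2, R3, R4)"]) (simp_all add: S_def F_def)
  qed
  ultimately obtain g where g: "continuous_map X euclidean g"
    and gS: "\<And>x. x \<in> topspace X \<Longrightarrow> g x \<in> S \<times> S \<times> S \<times> S \<and> F (g x) = U x"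
    using extremally_disconnected_lifting_euclidean[OF ED _ _ U] by blast
  have g_cont: "continuous_map X euclidean (\<lambda>x. h (g x))" if "continuous_on UNIV h" for h
    :: "_ \<Rightarrow> complex^'n^'n"
    using continuous_map_compose[OF g continuous_map_iff_continuous2[THEN iffD2, OF that]]
    by (simp add: o_def)
  show ?thesis
  proof (intro exI conjI ballI)
    show "symmetry_in X (\<lambda>x. fst (g x))" "symmetry_in X (\<lambda>x. fst (snd (g x)))"
      "symmetry_in X (\<lambda>x. fst (snd (snd (g x))))" "symmetry_in X (\<lambda>x. snd (snd (snd (g x))))"
      unfolding symmetry_in_def cont_mat_fun_def using gS
      by (auto simp: S_def mem_Times_iff intro!: g_cont continuous_intros)
    show "U x = fst (g x) ** fst (snd (g x)) ** fst (snd (snd (g x))) ** snd (snd (snd (g x)))"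
      if "x \<in> topspace X" for x
      using gS[OF that] by (simp add: F_def)
  qed
qed

lemma center_symmetry_det_c_iff:
  assumes "unitary_in X U"
  shows "center_symmetry X (det_c U) \<longleftrightarrow> (\<forall>x\<in>topspace X. cnj (det (U x)) = det (U x))"
proof -
  have "continuous_map X euclidean U"
    using assms by (simp add: unitary_in_def cont_mat_fun_def)
  then have "continuous_map X euclidean (\<lambda>x. det (U x))"
    using continuous_map_compose[OF _ continuous_map_iff_continuous2[THEN iffD2, OF continuous_on_det]]
    by (simp add: o_def)
  then show ?thesis
    using assms det_unitary_unimodular
    by (auto simp: center_symmetry_def det_c_def unitary_in_def)
qed

theorem theorem2p4:
  fixes X :: "'a topology" and U :: "'a \<Rightarrow> complex^'n^'n"
  assumes "hyperstonean X"
    and "unitary_in X U"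
  shows "(\<exists>R1 R2 R3 R4. symmetry_in X R1 \<and> symmetry_in X R2 \<and>
            symmetry_in X R3 \<and> symmetry_in X R4 \<and>
            (\<forall>x\<in>topspace X. U x = R1 x ** R2 x ** R3 x ** R4 x))
         \<longleftrightarrow> center_symmetry X (det_c U)"
proof -
  have ED: "extremally_disconnected X"
    using assms(1) by (simp add: hyperstonean_def stonean_space_def)
  have U: "continuous_map X euclidean U" and unitary: "\<And>x. x \<in> topspace X \<Longrightarrow> mat_unitary (U x)"
    using assms(2) by (auto simp: unitary_in_def cont_mat_fun_def)
  have "(\<exists>R1 R2 R3 R4. symmetry_in X R1 \<and> symmetry_in X R2 \<and>
            symmetry_in X R3 \<and> symmetry_in X R4 \<and>
            (\<forall>x\<in>topspace X. U x = R1 x ** R2 x ** R3 x ** R4 x))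
        \<longleftrightarrow> (\<forall>x\<in>topspace X. cnj (det (U x)) = det (U x))" (is "?factor \<longleftrightarrow> ?real")
  proof
    assume ?factor
    then show ?real
      by (auto simp: symmetry_in_def det_mul det_symmetry_real)
  next
    assume ?real
    then show ?factor
      using continuous_symmetry_factorization[OF ED U] unitary_real_det_four_symmetries unitary
      by blast
  qed
  then show ?thesis
    using center_symmetry_det_c_iff[OF assms(2)] by simp
qed

end
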